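(* Let $\beta\in[0,1]$ and let $f\in\mathcal{A}_{\beta}$ with $f(z)=z+\sum_{n=2}^{\infty}a_nz^n$. Then for every real $\mu$, $$|a_3-\mu a_2^2|\le\begin{cases}\dfrac{(8-12\mu)+(8\mu-8)\beta+2\beta^2}{(3-2\beta)(2-\beta)^2}, & \mu<0,\\[2mm] \dfrac{2}{3-2\beta}, & 0\le\mu\le\dfrac{(2-\beta)^2}{3-2\beta},\\[2mm] -\dfrac{(8-12\mu)+(8\mu-8)\beta+2\beta^2}{(3-2\beta)(2-\beta)^2}, & \mu>\dfrac{(2-\beta)^2}{3-2\beta}.\end{cases}$$ All inequalities are sharp.
   Context: $\mathbb{D}=\{z\in\mathbb{C}:|z|<1\}$. For $\beta\in[0,1]$, $\mathcal{A}_{\beta}$ is the set of analytic functions $f$ on $\mathbb{D}$ with $f(0)=0$, $f'(0)=1$ (so $f(z)=z+\sum_{n\ge2}a_nz^n$) such that $\operatorname{Re}\big(\beta f(z)/z+(1-\beta)f'(z)\big)>0$ for all $z\in\mathbb{D}$. Sharp means that for each $\mu$ in each range there is $f\in\mathcal{A}_\beta$ attaining equality (for $\mu<0$ or $\mu>(2-\beta)^2/(3-2\beta)$: $f(z)=z+\sum_{n\ge2}\frac{2}{n-\beta(n-1)}z^n$; for the middle range: $f$ with $\beta f(z)/z+(1-\beta)f'(z)=\frac{1+z^2}{1-z^2}$). *)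

theory Defs
  imports "HOL-Complex_Analysis.Complex_Analysis"
begin

definition taylor_coeff :: "(complex \<Rightarrow> complex) \<Rightarrow> nat \<Rightarrow> complex" where
  "taylor_coeff f n = (deriv ^^ n) f 0 / of_nat (fact n)"

text \<open>The quantity beta f(z)/z + (1-beta) f'(z) is required to have
positive real part for z in the unit disc; at z = 0 it equals 1 (by continuous
extension), so it suffices to impose the condition for z different from 0.\<close>
definition A_class :: "real \<Rightarrow> (complex \<Rightarrow> complex) set" where
  "A_class \<beta> = {f. f holomorphic_on ball 0 1 \<and> f 0 = 0 \<and> deriv f 0 = 1 \<and>
     (\<forall>z\<in>ball 0 1. z \<noteq> 0 \<longrightarrow>
        Re (of_real \<beta> * (f z / z) + of_real (1 - \<beta>) * deriv f z) > 0)}"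

definition fekete_bound :: "real \<Rightarrow> real \<Rightarrow> real" where
  "fekete_bound \<beta> \<mu> =
    (if \<mu> < 0 then
       ((8 - 12*\<mu>) + (8*\<mu> - 8)*\<beta> + 2*\<beta>^2) / ((3 - 2*\<beta>) * (2 - \<beta>)^2)
     else if \<mu> \<le> (2 - \<beta>)^2 / (3 - 2*\<beta>) then 2 / (3 - 2*\<beta>)
     else - (((8 - 12*\<mu>) + (8*\<mu> - 8)*\<beta> + 2*\<beta>^2) / ((3 - 2*\<beta>) * (2 - \<beta>)^2)))"

end

theory Submission
  imports Defs
begin

(* Writing p(z) = beta f(z)/z + (1 - beta) f'(z), the map f |-> p is a bijection between A_beta and
   the Caratheodory class (p(0) = 1, Re p > 0), and on coefficients it reads
   c_n = (1 + n (1 - beta)) a_(n+1).  Hence a_3 - mu a_2^2 = (c_2 - nu c_1^2) / (3 - 2 beta) with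
   nu = mu (3 - 2 beta) / (2 - beta)^2, and the theorem is the Fekete-Szego inequality
   |c_2 - nu c_1^2| <= max 2 |4 nu - 2| for the Caratheodory class.  That inequality follows from
   |c_2 - c_1^2/2| <= 2 - |c_1|^2/2, which is the Schwarz-Pick bound |h'(0)| <= 1 - |h(0)|^2 for
   h(z) = w(z)/z, w = (p - 1)/(p + 1).  Equality holds for p = (1 + z)/(1 - z) and
   p = (1 + z^2)/(1 - z^2), pulled back to A_beta. *)

lemma taylor_coeff_conv_fps_expansion: "taylor_coeff f n = fps_nth (fps_expansion f 0) n"
  by (simp add: taylor_coeff_def fps_expansion_def)

lemma taylor_coeff_eq_fps_nth:
  assumes "f has_fps_expansion F"
  shows "taylor_coeff f n = fps_nth F n"
  by (simp add: taylor_coeff_def fps_nth_fps_expansion[OF assms])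

lemma has_fps_expansion_cong_ball:
  assumes "f has_fps_expansion F" and "0 < r" and "\<And>z. z \<in> ball 0 r \<Longrightarrow> f z = g z"
  shows "g has_fps_expansion F"
proof -
  have "eventually (\<lambda>z. z \<in> ball 0 r) (nhds 0)"
    using \<open>0 < r\<close> by (intro eventually_nhds_in_open) auto
  then have "eventually (\<lambda>z. f z = g z) (nhds 0)"
    by eventually_elim (rule assms(3))
  with assms(1) show ?thesis
    by (simp add: has_fps_expansion_cong)
qed

lemma fps_conv_radius_mono:
  fixes F G :: "'a :: {banach, real_normed_div_algebra} fps"
  assumes "\<And>n. norm (fps_nth F n) \<le> norm (fps_nth G n)"
  shows "fps_conv_radius G \<le> fps_conv_radius F"
  unfolding fps_conv_radius_def
proof (rule conv_radius_geI_ex')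
  fix r :: real
  assume "0 < r" "ereal r < conv_radius (fps_nth G)"
  then have "summable (\<lambda>n. norm (fps_nth G n * of_real r ^ n))"
    by (intro abs_summable_in_conv_radius) simp
  then show "summable (\<lambda>n. fps_nth F n * of_real r ^ n)"
    by (rule summable_comparison_test'[where N = 0])
       (simp add: norm_mult mult_right_mono assms)
qed

lemma fps_conv_radius_divide_coeffs:
  fixes F :: "'a :: {banach, real_normed_field} fps"
  assumes "\<And>n. 1 \<le> norm (d n)"
  shows "fps_conv_radius F \<le> fps_conv_radius (Abs_fps (\<lambda>n. fps_nth F n / d n))"
proof (rule fps_conv_radius_mono)
  fix n
  have "norm (fps_nth F n) / norm (d n) \<le> norm (fps_nth F n) / 1"
    using assms[of n] by (intro divide_left_mono) auto
  then show "norm (fps_nth (Abs_fps (\<lambda>n. fps_nth F n / d n)) n) \<le> norm (fps_nth F n)"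
    by (simp add: norm_divide)
qed

lemma fps_expansion_on_unit_disc:
  assumes "p holomorphic_on ball 0 1"
  shows "1 \<le> fps_conv_radius (fps_expansion p 0)"
    and "z \<in> ball 0 1 \<Longrightarrow> eval_fps (fps_expansion p 0) z = p z"
  using conv_radius_fps_expansion[where r = "ereal 1" and f = p, of 0]
    eval_fps_expansion'[where r = "ereal 1" and f = p] assms
  by (simp_all add: one_ereal_def)

lemma Schwarz_Pick_at_0:
  assumes hol: "g holomorphic_on ball 0 1" and lt1: "\<forall>z\<in>ball 0 1. norm (g z) < 1"
  shows "norm (deriv g 0) \<le> 1 - norm (g 0) ^ 2"
proof -
  define a where "a = g 0"
  have a: "norm a < 1"
    using lt1 by (simp add: a_def)
  have pos: "0 < 1 - norm a ^ 2"
    using a by (simp add: power_less_one_iff)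
  have den: "1 - cnj a * a = of_real (1 - norm a ^ 2)"
    using complex_norm_square[of a] by (simp add: mult.commute)
  have nz: "1 - cnj a * a \<noteq> 0"
    unfolding den using pos by (simp only: of_real_eq_0_iff)
  define k where "k = Moebius_function 0 a \<circ> g"
  have holk: "k holomorphic_on ball 0 1"
    unfolding k_def using lt1
    by (intro holomorphic_on_compose_gen[OF hol Moebius_function_holomorphic[OF a]]) auto
  have "norm (deriv k 0) \<le> 1"
    using lt1 Moebius_function_norm_lt_1[OF a]
    by (intro Schwarz_Lemma(2)[OF holk, of 0]) (auto simp: k_def a_def Moebius_function_eq_zero)
  moreover have "deriv k 0 = deriv g 0 / of_real (1 - norm a ^ 2)"
  proof -
    have "(g has_field_derivative deriv g 0) (at 0)"
      using hol by (intro holomorphic_derivI[of _ "ball 0 1"]) auto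
    then have "(k has_field_derivative (deriv g 0 * (1 - cnj a * g 0) - (g 0 - a) * - (cnj a * deriv g 0))
                 / (1 - cnj a * g 0) ^ 2) (at 0)"
      unfolding k_def comp_def Moebius_function_simple using nz
      by (auto intro!: derivative_eq_intros simp: a_def power2_eq_square)
    then have "deriv k 0 = deriv g 0 / (1 - cnj a * a)"
      using nz by (auto dest!: DERIV_imp_deriv simp: a_def power2_eq_square)
    then show ?thesis
      by (simp only: den)
  qed
  ultimately have "norm (deriv g 0) / (1 - norm a ^ 2) \<le> 1"
    using pos by (simp add: norm_divide del: of_real_diff)
  then show ?thesis
    using pos by (simp add: a_def divide_le_eq)
qed

lemma Schwarz_quotient_norm_lt_1:
  assumes hol: "w holomorphic_on ball 0 1" and w0: "w 0 = 0"
    and lt1: "\<forall>z\<in>ball 0 1. norm (w z) < 1"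
    and w_eq: "\<And>z. norm z < 1 \<Longrightarrow> w z = z * h z" and dw0: "deriv w 0 = h 0"
    and not_rotation: "\<nexists>\<alpha>. (\<forall>z. norm z < 1 \<longrightarrow> w z = \<alpha> * z) \<and> norm \<alpha> = 1"
    and z: "z \<in> ball 0 1"
  shows "norm (h z) < 1"
proof -
  have "norm (w z) < 1" if "norm z < 1" for z
    using lt1 that by simp
  note Schwarz = Schwarz_Lemma[OF hol w0 this]
  have not_rot: "norm (deriv w 0) \<noteq> 1" "\<And>z. norm z < 1 \<Longrightarrow> z \<noteq> 0 \<Longrightarrow> norm (w z) \<noteq> norm z"
    using not_rotation Schwarz(3)[of 0] by auto
  show ?thesis
  proof (cases "z = 0")
    case True
    then show ?thesis
      using Schwarz(2)[of 0] not_rot(1) dw0 by simp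
  next
    case False
    have "norm (w z) \<le> norm z"
      using Schwarz(1)[of z] z by simp
    with not_rot(2)[of z] z False have "norm (w z) < norm z"
      by simp
    then show ?thesis
      using z w_eq[of z] False by (simp add: norm_mult)
  qed
qed

lemma Schwarz_second_coeff:
  assumes hol: "w holomorphic_on ball 0 1" and w0: "w 0 = 0"
    and lt1: "\<forall>z\<in>ball 0 1. norm (w z) < 1"
  shows "norm (taylor_coeff w 2) \<le> 1 - norm (taylor_coeff w 1) ^ 2"
proof (cases "\<exists>\<alpha>. (\<forall>z. norm z < 1 \<longrightarrow> w z = \<alpha> * z) \<and> norm \<alpha> = 1")
  case True
  then obtain \<alpha> where w_eq: "\<And>z. norm z < 1 \<Longrightarrow> w z = \<alpha> * z" and "norm \<alpha> = 1"
    by blast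
  have "w has_fps_expansion fps_const \<alpha> * fps_X"
    by (rule has_fps_expansion_cong_ball[OF has_fps_expansion_cmult_left[OF has_fps_expansion_fps_X], of 1])
       (auto simp: w_eq)
  then show ?thesis
    using \<open>norm \<alpha> = 1\<close> by (simp add: taylor_coeff_eq_fps_nth)
next
  case False
  obtain h where holh: "h holomorphic_on ball 0 1"
    and w_eq: "\<And>z. norm z < 1 \<Longrightarrow> w z = z * h z" and dw0: "deriv w 0 = h 0"
    using Schwarz3[OF hol w0] by blast
  have "w has_fps_expansion fps_X * fps_expansion h 0"
    by (rule has_fps_expansion_cong_ball[OF has_fps_expansion_mult[OF has_fps_expansion_fps_X
          has_fps_expansion_fps_expansion[OF open_ball _ holh]], of 1]) (auto simp: w_eq)
  then have "taylor_coeff w 1 = h 0" and "taylor_coeff w 2 = deriv h 0"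
    by (simp_all add: taylor_coeff_eq_fps_nth fps_expansion_def numeral_2_eq_2)
  moreover have "\<forall>z\<in>ball 0 1. norm (h z) < 1"
    using Schwarz_quotient_norm_lt_1[OF hol w0 lt1 w_eq dw0 False] by blast
  ultimately show ?thesis
    using Schwarz_Pick_at_0[OF holh] by simp
qed

definition Caratheodory_class :: "(complex \<Rightarrow> complex) set" where
  "Caratheodory_class = {p. p holomorphic_on ball 0 1 \<and> p 0 = 1 \<and> (\<forall>z\<in>ball 0 1. Re (p z) > 0)}"

lemma Caratheodory_Cayley_transform:
  assumes "p \<in> Caratheodory_class"
  defines "w \<equiv> \<lambda>z. (p z - 1) / (p z + 1)"
  shows "w holomorphic_on ball 0 1" and "w 0 = 0" and "\<forall>z\<in>ball 0 1. norm (w z) < 1"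
    and "\<forall>z\<in>ball 0 1. p z = w z * (p z + 1) + 1"
proof -
  have hol: "p holomorphic_on ball 0 1" and p0: "p 0 = 1" and re: "\<forall>z\<in>ball 0 1. Re (p z) > 0"
    using assms(1) by (auto simp: Caratheodory_class_def)
  have nz: "p z + 1 \<noteq> 0" if "z \<in> ball 0 1" for z
  proof -
    have "0 < Re (p z)"
      using re that by blast
    then have "0 < Re (p z + 1)"
      by simp
    then show ?thesis
      by (metis less_irrefl zero_complex.sel(1))
  qed
  show "w holomorphic_on ball 0 1"
    unfolding w_def using nz by (intro holomorphic_intros hol) auto
  show "w 0 = 0"
    using p0 by (simp add: w_def)
  show "\<forall>z\<in>ball 0 1. norm (w z) < 1"
  proof
    fix z :: complex
    assume z: "z \<in> ball 0 1"
    have "norm (p z - 1) ^ 2 < norm (p z + 1) ^ 2"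
      using re z unfolding cmod_power2 by (simp add: power2_eq_square algebra_simps)
    then show "norm (w z) < 1"
      by (simp add: w_def norm_divide divide_less_eq_1 power_less_imp_less_base)
  qed
  show "\<forall>z\<in>ball 0 1. p z = w z * (p z + 1) + 1"
    using nz by (simp add: w_def)
qed

lemma Caratheodory_coeff_bounds:
  assumes "p \<in> Caratheodory_class"
  shows "norm (taylor_coeff p 1) \<le> 2"
    and "norm (taylor_coeff p 2 - (taylor_coeff p 1)\<^sup>2 / 2) \<le> 2 - norm (taylor_coeff p 1) ^ 2 / 2"
proof -
  define w where "w = (\<lambda>z. (p z - 1) / (p z + 1))"
  have holw: "w holomorphic_on ball 0 1" and w0: "w 0 = 0" and w_lt1: "\<forall>z\<in>ball 0 1. norm (w z) < 1"
    and p_eq: "\<forall>z\<in>ball 0 1. p z = w z * (p z + 1) + 1"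
    using Caratheodory_Cayley_transform[OF assms] unfolding w_def by simp_all
  have hol: "p holomorphic_on ball 0 1" and p0: "p 0 = 1"
    using assms by (auto simp: Caratheodory_class_def)
  have Schwarz: "norm (taylor_coeff w 2) \<le> 1 - norm (taylor_coeff w 1) ^ 2"
    by (rule Schwarz_second_coeff[OF holw w0 w_lt1])
  define P W where "P = fps_expansion p 0" and "W = fps_expansion w 0"
  have "(\<lambda>z. w z * (p z + 1) + 1) has_fps_expansion W * (P + 1) + 1"
    unfolding P_def W_def using hol holw
    by (intro has_fps_expansion_add has_fps_expansion_mult has_fps_expansion_1
        has_fps_expansion_fps_expansion[of "ball 0 1"]) auto
  then have "p has_fps_expansion W * (P + 1) + 1"
    by (rule has_fps_expansion_cong_ball[of _ _ 1]) (use p_eq in auto)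
  then have P_eq: "P = W * (P + 1) + 1"
    by (intro fps_ext) (simp add: P_def taylor_coeff_eq_fps_nth flip: taylor_coeff_conv_fps_expansion)
  have W0: "fps_nth W 0 = 0" and P0: "fps_nth P 0 = 1"
    using p0 w0 by (simp_all add: W_def P_def fps_expansion_def)
  have P1: "fps_nth P 1 = 2 * fps_nth W 1"
    by (subst P_eq) (simp add: fps_mult_nth W0 P0)
  have P2: "fps_nth P 2 = 2 * fps_nth W 2 + fps_nth W 1 * fps_nth P 1"
    by (subst P_eq) (simp add: fps_mult_nth W0 P0 numeral_2_eq_2)
  have coeffs: "taylor_coeff p n = fps_nth P n" "taylor_coeff w n = fps_nth W n" for n
    by (simp_all add: P_def W_def taylor_coeff_conv_fps_expansion)
  have "norm (fps_nth W 1) ^ 2 \<le> 1"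
    using Schwarz norm_ge_zero[of "fps_nth W 2"] unfolding coeffs by linarith
  then have "norm (fps_nth W 1) \<le> 1"
    by (simp add: power_le_one_iff)
  then show "norm (taylor_coeff p 1) \<le> 2"
    unfolding coeffs P1 norm_mult by simp
  have P2_P1: "fps_nth P 2 - (fps_nth P 1)\<^sup>2 / 2 = 2 * fps_nth W 2"
    unfolding P2 P1 by (simp add: power2_eq_square)
  have "norm (taylor_coeff p 2 - (taylor_coeff p 1)\<^sup>2 / 2) = 2 * norm (fps_nth W 2)"
    unfolding coeffs P2_P1 by (simp add: norm_mult)
  moreover have "norm (taylor_coeff p 1) ^ 2 = 4 * norm (fps_nth W 1) ^ 2"
    unfolding coeffs P1 by (simp add: norm_mult power_mult_distrib)
  ultimately show "norm (taylor_coeff p 2 - (taylor_coeff p 1)\<^sup>2 / 2) \<le> 2 - norm (taylor_coeff p 1) ^ 2 / 2"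
    using Schwarz unfolding coeffs by linarith
qed

lemma Caratheodory_Fekete_Szego:
  fixes \<nu> :: real
  assumes "p \<in> Caratheodory_class"
  shows "norm (taylor_coeff p 2 - of_real \<nu> * (taylor_coeff p 1)\<^sup>2) \<le> max 2 \<bar>4 * \<nu> - 2\<bar>"
proof -
  define c1 c2 where "c1 = taylor_coeff p 1" and "c2 = taylor_coeff p 2"
  define X where "X = norm c1 ^ 2"
  have X: "0 \<le> X" "X \<le> 4" and c2: "norm (c2 - c1\<^sup>2 / 2) \<le> 2 - X / 2"
    using Caratheodory_coeff_bounds[OF assms] power_mono[of "norm c1" 2 2]
    by (auto simp: X_def c1_def c2_def)
  have "c2 - of_real \<nu> * c1\<^sup>2 = (c2 - c1\<^sup>2 / 2) - of_real (\<nu> - 1/2) * c1\<^sup>2"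
    by (simp add: algebra_simps)
  then have "norm (c2 - of_real \<nu> * c1\<^sup>2) \<le> norm (c2 - c1\<^sup>2 / 2) + \<bar>\<nu> - 1/2\<bar> * X"
    using norm_triangle_ineq4 by (metis X_def norm_mult norm_of_real norm_power)
  also have "\<dots> \<le> 2 + (\<bar>\<nu> - 1/2\<bar> - 1/2) * X"
    using c2 by (simp add: algebra_simps)
  also have "\<dots> \<le> max 2 \<bar>4 * \<nu> - 2\<bar>"
  proof (cases "\<bar>\<nu> - 1/2\<bar> \<le> 1/2")
    case True
    then have "(\<bar>\<nu> - 1/2\<bar> - 1/2) * X \<le> 0"
      using X by (intro mult_nonpos_nonneg) auto
    then show ?thesis
      by simp
  next
    case False
    then have "(\<bar>\<nu> - 1/2\<bar> - 1/2) * X \<le> (\<bar>\<nu> - 1/2\<bar> - 1/2) * 4"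
      using X by (intro mult_left_mono) auto
    then show ?thesis
      by (simp add: abs_if split: if_splits)
  qed
  finally show ?thesis
    by (simp add: c1_def c2_def)
qed

lemma Re_one_div_one_minus_gt_half:
  assumes "norm w < 1"
  shows "Re (1 / (1 - w)) > 1 / 2"
proof -
  define D where "D = (1 - Re w)\<^sup>2 + (Im w)\<^sup>2"
  have "Re w < 1" and "(Re w)\<^sup>2 + (Im w)\<^sup>2 < 1"
    using assms abs_Re_le_cmod[of w] by (auto simp: cmod_power2[symmetric] power_less_one_iff)
  then have "0 < D" and "D < 2 * (1 - Re w)"
    unfolding D_def by (auto intro!: add_pos_nonneg) (simp add: power2_eq_square algebra_simps)
  moreover have "Re (1 / (1 - w)) = (1 - Re w) / D"
    by (simp add: Re_divide D_def)
  ultimately show ?thesis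
    by (simp add: less_divide_eq)
qed

lemma Caratheodory_extremal:
  fixes \<epsilon> :: complex
  assumes \<epsilon>: "norm \<epsilon> \<le> 1"
  defines "p \<equiv> \<lambda>z. 1 / (1 - z) + 1 / (1 - \<epsilon> * z) - 1"
  shows "p \<in> Caratheodory_class" and "taylor_coeff p 1 = 1 + \<epsilon>" and "taylor_coeff p 2 = 1 + \<epsilon>\<^sup>2"
proof -
  have \<epsilon>z: "norm (\<epsilon> * z) < 1" if "z \<in> ball 0 1" for z
    using that mult_right_mono[OF \<epsilon> norm_ge_zero[of z]] by (simp add: norm_mult)
  have nz: "1 - z \<noteq> 0" "1 - \<epsilon> * z \<noteq> 0" if "z \<in> ball 0 1" for z
    using that \<epsilon>z[OF that] by auto
  have "p holomorphic_on ball 0 1"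
    unfolding p_def using nz by (intro holomorphic_intros) auto
  moreover have "Re (p z) > 0" if "z \<in> ball 0 1" for z
    using Re_one_div_one_minus_gt_half[of z] Re_one_div_one_minus_gt_half[OF \<epsilon>z[OF that]] that
    by (simp add: p_def)
  ultimately show "p \<in> Caratheodory_class"
    by (simp add: Caratheodory_class_def p_def)
  have "p has_fps_expansion Abs_fps (\<lambda>n. if n = 0 then 1 else 1 + \<epsilon> ^ n)"
  proof (rule has_fps_expansionI)
    have "(\<lambda>n. (if n = 0 then 1 else 1 + \<epsilon> ^ n) * z ^ n) sums p z" if "z \<in> ball 0 1" for z
    proof -
      have "(if n = 0 then 1 else 1 + \<epsilon> ^ n) * z ^ n = z ^ n + (\<epsilon> * z) ^ n - (if n = 0 then 1 else 0)"
        for n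
        by (simp add: power_mult_distrib algebra_simps)
      then show ?thesis
        unfolding p_def using that \<epsilon>z[OF that]
        by (simp only:) (intro sums_diff sums_add geometric_sums sums_single[where f="\<lambda>_. 1", simplified], auto)
    qed
    then show "\<forall>\<^sub>F z in nhds 0. (\<lambda>n. fps_nth (Abs_fps (\<lambda>n. if n = 0 then 1 else 1 + \<epsilon> ^ n)) n * z ^ n) sums p z"
      using eventually_nhds_in_open[of "ball 0 1" 0] by (auto elim!: eventually_mono)
  qed
  then show "taylor_coeff p 1 = 1 + \<epsilon>" and "taylor_coeff p 2 = 1 + \<epsilon>\<^sup>2"
    by (simp_all add: taylor_coeff_eq_fps_nth)
qed

lemma Caratheodory_Fekete_Szego_sharp:
  fixes \<nu> :: real
  obtains p where "p \<in> Caratheodory_class"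
    and "norm (taylor_coeff p 2 - of_real \<nu> * (taylor_coeff p 1)\<^sup>2) = max 2 \<bar>4 * \<nu> - 2\<bar>"
proof -
  \<comment> \<open>\<open>\<epsilon> = 1\<close> gives \<open>(1 + z) / (1 - z)\<close>, \<open>\<epsilon> = -1\<close> gives \<open>(1 + z\<^sup>2) / (1 - z\<^sup>2)\<close>\<close>
  define \<epsilon> :: complex where "\<epsilon> = (if \<bar>4 * \<nu> - 2\<bar> \<le> 2 then -1 else 1)"
  define p where "p z = 1 / (1 - z) + 1 / (1 - \<epsilon> * z) - 1" for z
  have "norm \<epsilon> \<le> 1"
    by (simp add: \<epsilon>_def)
  then have p: "p \<in> Caratheodory_class" "taylor_coeff p 1 = 1 + \<epsilon>" "taylor_coeff p 2 = 1 + \<epsilon>\<^sup>2"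
    unfolding p_def[abs_def] by (rule Caratheodory_extremal)+
  have "norm (1 + \<epsilon>\<^sup>2 - of_real \<nu> * (1 + \<epsilon>)\<^sup>2) = max 2 \<bar>4 * \<nu> - 2\<bar>"
  proof (cases "\<bar>4 * \<nu> - 2\<bar> \<le> 2")
    case True
    then show ?thesis
      by (simp add: \<epsilon>_def)
  next
    case False
    have "1 + \<epsilon>\<^sup>2 - of_real \<nu> * (1 + \<epsilon>)\<^sup>2 = of_real (2 - 4 * \<nu>)"
      using False by (simp add: \<epsilon>_def)
    then show ?thesis
      using False by (simp only: norm_of_real)
  qed
  with p that show ?thesis
    by simp
qed

lemma fps_nth_quotient_deriv_combination:
  fixes \<beta> :: real and F :: "complex fps"
  shows "fps_nth (fps_const (of_real \<beta>) * F + fps_const (of_real (1 - \<beta>)) * fps_deriv (fps_X * F)) n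
           = of_real (1 + real n * (1 - \<beta>)) * fps_nth F n"
  by (simp add: algebra_simps)

lemma A_class_imp_Caratheodory:
  assumes "f \<in> A_class \<beta>"
  obtains p where "p \<in> Caratheodory_class"
    and "\<And>n. taylor_coeff p n = of_real (1 + real n * (1 - \<beta>)) * taylor_coeff f (Suc n)"
proof -
  have hol: "f holomorphic_on ball 0 1" and "f 0 = 0" and df0: "deriv f 0 = 1"
    and re: "\<forall>z\<in>ball 0 1. z \<noteq> 0 \<longrightarrow> Re (of_real \<beta> * (f z / z) + of_real (1 - \<beta>) * deriv f z) > 0"
    using assms by (auto simp: A_class_def)
  obtain F where holF: "F holomorphic_on ball 0 1" and f_eq: "\<And>z. norm z < 1 \<Longrightarrow> f z = z * F z"
    and F0: "deriv f 0 = F 0"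
    using Schwarz3[OF hol \<open>f 0 = 0\<close>] by blast
  define p where "p z = of_real \<beta> * F z + of_real (1 - \<beta>) * deriv f z" for z
  have "p holomorphic_on ball 0 1"
    unfolding p_def using hol holF by (intro holomorphic_intros holomorphic_deriv) auto
  moreover have "p 0 = 1"
    using F0 df0 by (simp add: p_def algebra_simps flip: of_real_add)
  moreover have "Re (p z) > 0" if "z \<in> ball 0 1" for z
  proof (cases "z = 0")
    case False
    then have "F z = f z / z"
      using f_eq[of z] that by simp
    then show ?thesis
      using re that False by (simp add: p_def)
  qed (use \<open>p 0 = 1\<close> in simp)
  ultimately have "p \<in> Caratheodory_class"
    by (simp add: Caratheodory_class_def)
  define Fe where "Fe = fps_expansion F 0"
  have expF: "F has_fps_expansion Fe"
    unfolding Fe_def using holF by (intro has_fps_expansion_fps_expansion[of "ball 0 1"]) auto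
  have expf: "f has_fps_expansion fps_X * Fe"
    by (rule has_fps_expansion_cong_ball[OF has_fps_expansion_mult[OF has_fps_expansion_fps_X expF], of 1])
       (auto simp: f_eq)
  have expp: "p has_fps_expansion
          fps_const (of_real \<beta>) * Fe + fps_const (of_real (1 - \<beta>)) * fps_deriv (fps_X * Fe)"
    unfolding p_def[abs_def]
    by (intro has_fps_expansion_add has_fps_expansion_cmult_left has_fps_expansion_deriv expF expf)
  have "taylor_coeff p n = of_real (1 + real n * (1 - \<beta>)) * taylor_coeff f (Suc n)" for n
    unfolding taylor_coeff_eq_fps_nth[OF expp] taylor_coeff_eq_fps_nth[OF expf]
      fps_nth_quotient_deriv_combination by simp
  with \<open>p \<in> Caratheodory_class\<close> show ?thesis
    using that by blast
qed

lemma eval_fps_quotient_deriv_combination: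
  fixes Q :: "complex fps" and \<beta> :: real
  assumes R: "norm z < fps_conv_radius Q" and "z \<noteq> 0"
  shows "of_real \<beta> * (eval_fps (fps_X * Q) z / z) + of_real (1 - \<beta>) * deriv (eval_fps (fps_X * Q)) z
           = eval_fps (fps_const (of_real \<beta>) * Q + fps_const (of_real (1 - \<beta>)) * fps_deriv (fps_X * Q)) z"
proof -
  have RXQ: "norm z < fps_conv_radius (fps_X * Q)"
    using R fps_conv_radius_mult[of fps_X Q] by (auto intro: order.strict_trans2)
  have RD: "norm z < fps_conv_radius (fps_deriv (fps_X * Q))"
    using RXQ fps_conv_radius_deriv by (blast intro: order.strict_trans2)
  have Rc: "norm z < fps_conv_radius (fps_const c * G)" if "norm z < fps_conv_radius G" for c G
    using that fps_conv_radius_mult[of "fps_const c" G] by (auto intro: order.strict_trans2)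
  have "eval_fps (fps_X * Q) z = z * eval_fps Q z"
    using R by (simp add: eval_fps_mult)
  moreover have "deriv (eval_fps (fps_X * Q)) z = eval_fps (fps_deriv (fps_X * Q)) z"
    using RXQ by (rule eval_fps_deriv[symmetric])
  ultimately show ?thesis
    using assms RD Rc[OF R] Rc[OF RD] by (simp add: eval_fps_add eval_fps_mult)
qed

lemma eval_fps_in_A_class:
  fixes Q :: "complex fps" and \<beta> :: real
  assumes R: "1 \<le> fps_conv_radius Q" and Q0: "fps_nth Q 0 = 1"
    and re: "\<forall>z\<in>ball 0 1.
      Re (eval_fps (fps_const (of_real \<beta>) * Q + fps_const (of_real (1 - \<beta>)) * fps_deriv (fps_X * Q)) z) > 0"
  shows "eval_fps (fps_X * Q) \<in> A_class \<beta>"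
proof -
  have in_radius: "norm z < fps_conv_radius G" if "1 \<le> fps_conv_radius G" "z \<in> ball 0 1"
    for z :: complex and G :: "complex fps"
  proof -
    have "ereal (norm z) < 1"
      using that(2) by simp
    then show ?thesis
      using that(1) by (rule order.strict_trans2)
  qed
  have RXQ: "1 \<le> fps_conv_radius (fps_X * Q)"
    using R fps_conv_radius_mult[of fps_X Q] by simp
  have "eval_fps (fps_X * Q) holomorphic_on ball 0 1"
    using RXQ by (intro holomorphic_on_eval_fps) (auto simp: subset_eq intro: in_radius)
  moreover have "deriv (eval_fps (fps_X * Q)) 0 = 1"
    using eval_fps_deriv[OF in_radius[OF RXQ, of 0]] Q0 by (simp add: eval_fps_at_0)
  moreover have "Re (of_real \<beta> * (eval_fps (fps_X * Q) z / z) + of_real (1 - \<beta>) * deriv (eval_fps (fps_X * Q)) z) > 0"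
    if "z \<in> ball 0 1" "z \<noteq> 0" for z
    using eval_fps_quotient_deriv_combination[OF in_radius[OF R that(1)] that(2)] re that(1) by simp
  ultimately show ?thesis
    by (simp add: A_class_def eval_fps_at_0)
qed

lemma Caratheodory_imp_A_class:
  assumes "\<beta> \<le> 1" and "p \<in> Caratheodory_class"
  obtains f where "f \<in> A_class \<beta>"
    and "\<And>n. taylor_coeff p n = of_real (1 + real n * (1 - \<beta>)) * taylor_coeff f (Suc n)"
proof -
  have hol: "p holomorphic_on ball 0 1" and p0: "p 0 = 1" and re: "\<forall>z\<in>ball 0 1. Re (p z) > 0"
    using assms(2) by (auto simp: Caratheodory_class_def)
  define d where "d n = 1 + real n * (1 - \<beta>)" for n
  have d: "1 \<le> d n" and d_nz: "d n \<noteq> 0" for n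
    using assms(1) by (simp_all add: d_def add_nonneg_eq_0_iff)
  define P where "P = fps_expansion p 0"
  define Q where "Q = Abs_fps (\<lambda>n. fps_nth P n / of_real (d n))"
  have "fps_conv_radius P \<le> fps_conv_radius Q"
    unfolding Q_def by (intro fps_conv_radius_divide_coeffs) (metis d abs_ge_self norm_of_real order_trans)
  with fps_expansion_on_unit_disc(1)[OF hol] have RQ: "1 \<le> fps_conv_radius Q"
    unfolding P_def by (rule order.trans)
  have mix: "fps_const (of_real \<beta>) * Q + fps_const (of_real (1 - \<beta>)) * fps_deriv (fps_X * Q) = P"
  proof (rule fps_ext)
    fix n
    show "fps_nth (fps_const (of_real \<beta>) * Q + fps_const (of_real (1 - \<beta>)) * fps_deriv (fps_X * Q)) n
                 = fps_nth P n"
      unfolding fps_nth_quotient_deriv_combination d_def[symmetric] using d_nz by (simp add: Q_def)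
  qed
  have "fps_nth Q 0 = 1"
    using p0 by (simp add: Q_def P_def d_def fps_expansion_def)
  moreover have "\<forall>z\<in>ball 0 1.
      Re (eval_fps (fps_const (of_real \<beta>) * Q + fps_const (of_real (1 - \<beta>)) * fps_deriv (fps_X * Q)) z) > 0"
    unfolding mix P_def using re fps_expansion_on_unit_disc(2)[OF hol] by simp
  ultimately have "eval_fps (fps_X * Q) \<in> A_class \<beta>"
    by (rule eval_fps_in_A_class[OF RQ])
  moreover have "taylor_coeff p n = of_real (d n) * taylor_coeff (eval_fps (fps_X * Q)) (Suc n)" for n
  proof -
    have expf: "eval_fps (fps_X * Q) has_fps_expansion fps_X * Q"
      using RQ fps_conv_radius_mult[of fps_X Q]
      by (intro eval_fps_has_fps_expansion) (auto intro: less_le_trans[of 0 1])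
    show ?thesis
      unfolding taylor_coeff_eq_fps_nth[OF expf] taylor_coeff_conv_fps_expansion[of p]
      using d_nz by (simp add: Q_def P_def)
  qed
  ultimately show ?thesis
    using that by (simp add: d_def)
qed

lemma A_class_Fekete_Szego_functional:
  fixes \<beta> \<mu> :: real
  assumes "\<beta> \<le> 1"
    and coeff: "\<And>n. taylor_coeff p n = of_real (1 + real n * (1 - \<beta>)) * taylor_coeff f (Suc n)"
  shows "norm (taylor_coeff f 3 - of_real \<mu> * (taylor_coeff f 2)\<^sup>2)
           = norm (taylor_coeff p 2 - of_real (\<mu> * (3 - 2*\<beta>) / (2 - \<beta>)\<^sup>2) * (taylor_coeff p 1)\<^sup>2)
             / (3 - 2*\<beta>)"
proof -
  define s t where "s = 3 - 2*\<beta>" and "t = 2 - \<beta>"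
  have s: "0 < s" and t: "t \<noteq> 0"
    using assms by (auto simp: s_def t_def)
  have c1: "taylor_coeff p 1 = of_real t * taylor_coeff f 2"
    using coeff[of 1] by (simp add: t_def numeral_2_eq_2)
  have c2: "taylor_coeff p 2 = of_real s * taylor_coeff f 3"
    using coeff[of 2] by (simp add: s_def numeral_3_eq_3 numeral_2_eq_2 algebra_simps)
  have "of_real (\<mu> * s / t\<^sup>2) * (of_real t * taylor_coeff f 2)\<^sup>2
          = of_real (\<mu> * s / t\<^sup>2 * t\<^sup>2) * (taylor_coeff f 2)\<^sup>2"
    by (simp only: power_mult_distrib of_real_mult of_real_power mult.assoc)
  also have "\<dots> = of_real (s * \<mu>) * (taylor_coeff f 2)\<^sup>2"
    using t by simp
  finally have sq: "of_real (\<mu> * s / t\<^sup>2) * (of_real t * taylor_coeff f 2)\<^sup>2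
                      = of_real (s * \<mu>) * (taylor_coeff f 2)\<^sup>2" .
  have "taylor_coeff p 2 - of_real (\<mu> * s / t\<^sup>2) * (taylor_coeff p 1)\<^sup>2
          = of_real s * (taylor_coeff f 3 - of_real \<mu> * (taylor_coeff f 2)\<^sup>2)"
    unfolding c1 c2 sq by (simp add: algebra_simps)
  with s show ?thesis
    unfolding s_def[symmetric] t_def[symmetric] by (simp add: norm_mult)
qed

lemma fekete_bound_eq:
  fixes \<beta> \<mu> :: real
  assumes "0 \<le> \<beta>" and "\<beta> \<le> 1"
  shows "fekete_bound \<beta> \<mu> = max 2 \<bar>4 * (\<mu> * (3 - 2*\<beta>) / (2 - \<beta>)\<^sup>2) - 2\<bar> / (3 - 2*\<beta>)"
proof -
  define s t where "s = 3 - 2*\<beta>" and "t = 2 - \<beta>"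
  define \<nu> where "\<nu> = \<mu> * (s / t\<^sup>2)"
  have s: "0 < s" and t: "0 < t"
    using assms by (auto simp: s_def t_def)
  have "(8 - 12*\<mu>) + (8*\<mu> - 8)*\<beta> + 2*\<beta>^2 = 2 * t\<^sup>2 - 4 * \<mu> * s"
    unfolding s_def t_def by (simp add: power2_eq_square algebra_simps)
  then have numerator: "((8 - 12*\<mu>) + (8*\<mu> - 8)*\<beta> + 2*\<beta>^2) / ((3 - 2*\<beta>) * (2 - \<beta>)^2) = (2 - 4*\<nu>) / s"
    using s t unfolding \<nu>_def s_def[symmetric] t_def[symmetric] by (simp add: field_simps)
  have k: "0 < s / t\<^sup>2"
    using s t by simp
  consider "\<mu> < 0" | "0 \<le> \<mu>" "\<mu> \<le> t\<^sup>2 / s" | "t\<^sup>2 / s < \<mu>"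
    by linarith
  then have "fekete_bound \<beta> \<mu> = max 2 \<bar>4 * \<nu> - 2\<bar> / s"
  proof cases
    case 1
    then have "\<nu> < 0"
      unfolding \<nu>_def using k by (rule mult_neg_pos)
    then show ?thesis
      using 1 numerator by (simp add: fekete_bound_def s_def t_def)
  next
    case 2
    then have "0 \<le> \<nu>" "\<nu> \<le> 1"
      using k s t by (simp_all add: \<nu>_def field_simps)
    then show ?thesis
      using 2 by (simp add: fekete_bound_def s_def t_def)
  next
    case 3
    then have "1 < \<nu>"
      using k s t by (simp add: \<nu>_def field_simps)
    moreover have "0 < \<mu>"
      using 3 divide_pos_pos[OF zero_less_power[OF t, of 2] s] by linarith
    ultimately show ?thesis
      using 3 numerator by (simp add: fekete_bound_def s_def t_def minus_divide_left)
  qed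
  then show ?thesis
    by (simp add: \<nu>_def s_def t_def)
qed

lemma A_class_Fekete_Szego:
  fixes \<beta> \<mu> :: real
  assumes "\<beta> \<le> 1" and "f \<in> A_class \<beta>"
  shows "norm (taylor_coeff f 3 - of_real \<mu> * (taylor_coeff f 2)\<^sup>2)
           \<le> max 2 \<bar>4 * (\<mu> * (3 - 2*\<beta>) / (2 - \<beta>)\<^sup>2) - 2\<bar> / (3 - 2*\<beta>)"
proof -
  obtain p where p: "p \<in> Caratheodory_class"
    and coeff: "\<And>n. taylor_coeff p n = of_real (1 + real n * (1 - \<beta>)) * taylor_coeff f (Suc n)"
    using A_class_imp_Caratheodory[OF assms(2)] by blast
  have "0 < 3 - 2*\<beta>"
    using assms(1) by simp
  then show ?thesis
    unfolding A_class_Fekete_Szego_functional[OF assms(1) coeff]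
    by (intro divide_right_mono Caratheodory_Fekete_Szego[OF p]) simp
qed

lemma A_class_Fekete_Szego_sharp:
  fixes \<beta> \<mu> :: real
  assumes "\<beta> \<le> 1"
  shows "\<exists>f\<in>A_class \<beta>. norm (taylor_coeff f 3 - of_real \<mu> * (taylor_coeff f 2)\<^sup>2)
           = max 2 \<bar>4 * (\<mu> * (3 - 2*\<beta>) / (2 - \<beta>)\<^sup>2) - 2\<bar> / (3 - 2*\<beta>)"
proof -
  obtain p where p: "p \<in> Caratheodory_class"
    and p_extremal: "norm (taylor_coeff p 2 - of_real (\<mu> * (3 - 2*\<beta>) / (2 - \<beta>)\<^sup>2) * (taylor_coeff p 1)\<^sup>2)
                       = max 2 \<bar>4 * (\<mu> * (3 - 2*\<beta>) / (2 - \<beta>)\<^sup>2) - 2\<bar>"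
    using Caratheodory_Fekete_Szego_sharp by blast
  obtain f where f: "f \<in> A_class \<beta>"
    and coeff: "\<And>n. taylor_coeff p n = of_real (1 + real n * (1 - \<beta>)) * taylor_coeff f (Suc n)"
    using Caratheodory_imp_A_class[OF assms p] by blast
  have "norm (taylor_coeff f 3 - of_real \<mu> * (taylor_coeff f 2)\<^sup>2)
          = max 2 \<bar>4 * (\<mu> * (3 - 2*\<beta>) / (2 - \<beta>)\<^sup>2) - 2\<bar> / (3 - 2*\<beta>)"
    unfolding A_class_Fekete_Szego_functional[OF assms coeff] p_extremal ..
  with f show ?thesis
    by blast
qed

theorem theorem3p1:
  fixes \<beta> \<mu> :: real
  assumes "0 \<le> \<beta>" and "\<beta> \<le> 1"
  shows "(\<forall>f\<in>A_class \<beta>.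
            cmod (taylor_coeff f 3 - of_real \<mu> * (taylor_coeff f 2)^2) \<le> fekete_bound \<beta> \<mu>)
       \<and> (\<exists>f\<in>A_class \<beta>.
            cmod (taylor_coeff f 3 - of_real \<mu> * (taylor_coeff f 2)^2) = fekete_bound \<beta> \<mu>)"
  unfolding fekete_bound_eq[OF assms]
  using A_class_Fekete_Szego[OF \<open>\<beta> \<le> 1\<close>] A_class_Fekete_Szego_sharp[OF \<open>\<beta> \<le> 1\<close>] by blast

end
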